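(* Let $F$ be a sensori-computational device with a monoidal variator $(D,\odot)$ for $Y=Y(F)$. If some sensori-computational device output simulates $F$ modulo $\Delta_F^{D};\diamond_Y^{D}$, then some sensori-computational device output simulates $F$ modulo $\Delta_F^{D};\int_Y^{D}$.
   Context: A sensori-computational device is a 6-tuple $F=(V,V_0,Y,\tau,C,c)$ where $V$ is a non-empty finite set of states, $V_0\subseteq V$ a non-empty set of initial states, $Y=Y(F)$ a finite set of observations, $\tau:V\times V\to\mathcal{P}(Y)$, $C$ a set of outputs, $c:V\to\mathcal{P}(C)\setminus\{\emptyset\}$. A string $y_1\cdots y_n$ reaches $w$ from $v$ if there are states $w_0=v,\dots,w_n=w$ with $y_i\in\tau(w_{i-1},w_i)$; $\mathcal{R}_F(s)$ is the set of states reached by $s$ from some initial state; $\mathcal{L}(F)=\{s\in Y^*:\mathcal{R}_F(s)\ne\emptyset\}$; $\mathcal{C}_F(s)=\bigcup_{v\in\mathcal{R}_F(s)}c(v)$. For a relation $R\subseteq A\times B$ between sets of strings, $F'$ output simulates $F$ modulo $R$ if for every $s\in\mathcal{L}(F)$: (1) some $t\in\mathcal{L}(F')$ has $s\,R\,t$; (2) every $t\in B$ with $s\,R\,t$ satisfies $t\in\mathcal{L}(F')$ and $\mathcal{C}_F(s)\supseteq\mathcal{C}_{F'}(t)$. Relation composition: $R_1;R_2=\{(u,v):\exists r\ (u,r)\in R_1,(r,v)\in R_2\}$. A monoidal variator for $Y$ is a monoid $(D,\oplus,e_D)$ with a right action $\odot:Y\times D\to Y$ ($y\odot e_D=y$,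 $(y\odot d_1)\odot d_2=y\odot(d_1\oplus d_2)$). Its delta relation $\Delta_F^{D}\subseteq\mathcal{L}(F)\times(\{\epsilon\}\cup Y\cdot D^* )$ consists of $(\epsilon,\epsilon)$; $(y_0,y_0)$ for $y_0\in Y\cap\mathcal{L}(F)$; and $(y_0y_1\cdots y_m,\ y_0d_1\cdots d_m)$ for $y_0\cdots y_m\in\mathcal{L}(F)$, $m\ge1$, whenever $y_k=y_{k-1}\odot d_k$ for all $k$. The monoid disaggregator $\diamond_Y^{D}$ is the relation on $\{\epsilon\}\cup Y\cdot D^*$ consisting of $(\epsilon,\epsilon)$, $(y_0,y_0)$ for $y_0\in Y$, and $(y_0d_1\cdots d_m,\ y_0d_1'\cdots d_n')$ for $m,n\ge1$ whenever $d_1\oplus\cdots\oplus d_m=d_1'\oplus\cdots\oplus d_n'$. The monoid integrator is the function $\int_Y^{D}:\{\epsilon\}\cup Y\cdot D^*\to\{\epsilon\}\cup Y\cup Y\cdot D$ with $\epsilon\mapsto\epsilon$, $y_0\mapsto y_0$, and $y_0d_1\cdots d_m\mapsto y_0(d_1\oplus\cdots\oplus d_m)$ for $m\ge1$. *)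

theory Defs
  imports Main
begin

record ('v, 'y, 'c) scd =
  states :: "'v set"
  init   :: "'v set"
  obs    :: "'y set"
  trans  :: "'v \<Rightarrow> 'v \<Rightarrow> 'y set"
  outs   :: "'c set"
  out    :: "'v \<Rightarrow> 'c set"

definition is_scd :: "('v, 'y, 'c) scd \<Rightarrow> bool" where
  "is_scd F \<longleftrightarrow>
     finite (states F) \<and> states F \<noteq> {} \<and>
     init F \<subseteq> states F \<and> init F \<noteq> {} \<and>
     finite (obs F) \<and>
     (\<forall>v\<in>states F. \<forall>w\<in>states F. trans F v w \<subseteq> obs F) \<and>
     (\<forall>v\<in>states F. out F v \<subseteq> outs F \<and> out F v \<noteq> {})"

fun reach_from :: "('v, 'y, 'c) scd \<Rightarrow> 'v \<Rightarrow> 'y list \<Rightarrow> 'v set" where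
  "reach_from F v [] = (if v \<in> states F then {v} else {})"
| "reach_from F v (y # ys) =
     (\<Union>w \<in> {w \<in> states F. v \<in> states F \<and> y \<in> trans F v w}. reach_from F w ys)"

definition reached :: "('v, 'y, 'c) scd \<Rightarrow> 'y list \<Rightarrow> 'v set" where
  "reached F s = (\<Union>v \<in> init F. reach_from F v s)"

definition lang :: "('v, 'y, 'c) scd \<Rightarrow> 'y list set" where
  "lang F = {s. reached F s \<noteq> {}}"

definition outputs_of :: "('v, 'y, 'c) scd \<Rightarrow> 'y list \<Rightarrow> 'c set" where
  "outputs_of F s = (\<Union>v \<in> reached F s. out F v)"

definition output_simulates ::
  "('w, 'z, 'c) scd \<Rightarrow> ('v, 'y, 'c) scd \<Rightarrow> ('y list \<times> 'z list) set \<Rightarrow> bool" where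
  "output_simulates F' F R \<longleftrightarrow>
     (\<forall>s \<in> lang F.
        (\<exists>t. (s, t) \<in> R \<and> t \<in> lang F') \<and>
        (\<forall>t. (s, t) \<in> R \<longrightarrow> t \<in> lang F' \<and> outputs_of F' t \<subseteq> outputs_of F s))"

text \<open>Monoidal variator: monoid is the type 'd (class monoid_add, oplus = +, e = 0),
  right action act : Y x D -> Y on the observation set Y.\<close>
definition monoidal_variator :: "'y set \<Rightarrow> ('y \<Rightarrow> 'd::monoid_add \<Rightarrow> 'y) \<Rightarrow> bool" where
  "monoidal_variator Y act \<longleftrightarrow>
     (\<forall>y\<in>Y. \<forall>d. act y d \<in> Y) \<and>
     (\<forall>y\<in>Y. act y 0 = y) \<and>
     (\<forall>y\<in>Y. \<forall>d1 d2. act (act y d1) d2 = act y (d1 + d2))"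

text \<open>Strings in {eps} \<union> Y.D^* are lists over the alphabet 'y + 'd
  (Inl for elements of Y, Inr for elements of D).\<close>
definition delta_rel ::
  "('v, 'y, 'c) scd \<Rightarrow> ('y \<Rightarrow> 'd::monoid_add \<Rightarrow> 'y) \<Rightarrow> ('y list \<times> ('y + 'd) list) set" where
  "delta_rel F act =
     {([], [])}
     \<union> {([y0], [Inl y0]) | y0. y0 \<in> obs F \<and> [y0] \<in> lang F}
     \<union> {(y0 # ys, Inl y0 # map Inr ds) | y0 ys ds.
          y0 # ys \<in> lang F \<and> ys \<noteq> [] \<and> length ds = length ys \<and>
          (\<forall>k < length ds. (y0 # ys) ! (Suc k) = act ((y0 # ys) ! k) (ds ! k))}"

definition disaggregator :: "'y set \<Rightarrow> (('y + 'd::monoid_add) list \<times> ('y + 'd) list) set" where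
  "disaggregator Y =
     {([], [])}
     \<union> {([Inl y0], [Inl y0]) | y0. y0 \<in> Y}
     \<union> {(Inl y0 # map Inr ds, Inl y0 # map Inr ds') | y0 ds ds'.
          y0 \<in> Y \<and> ds \<noteq> [] \<and> ds' \<noteq> [] \<and> sum_list ds = sum_list ds'}"

definition integrator :: "'y set \<Rightarrow> (('y + 'd::monoid_add) list \<times> ('y + 'd) list) set" where
  "integrator Y =
     {([], [])}
     \<union> {([Inl y0], [Inl y0]) | y0. y0 \<in> Y}
     \<union> {(Inl y0 # map Inr ds, [Inl y0, Inr (sum_list ds)]) | y0 ds.
          y0 \<in> Y \<and> ds \<noteq> []}"

end

theory Submission
  imports Defs
begin

text \<open>The integrator sends d1 ... dm to the single increment d1 + ... + dm, which has the
  same sum, so its graph lies inside the disaggregator and the simulating device can be kept: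
  shrinking the relation preserves the universal clause of output simulation, and the existence
  clause survives because every string in the range of the delta relation lies in the domain of
  the integrator.\<close>

lemma output_simulates_lang_subset_Domain:
  "output_simulates F' F R \<Longrightarrow> lang F \<subseteq> Domain R"
  unfolding output_simulates_def by blast

lemma output_simulates_subrel:
  assumes "output_simulates F' F R" "R' \<subseteq> R" "lang F \<subseteq> Domain R'"
  shows "output_simulates F' F R'"
  using assms unfolding output_simulates_def by blast

lemma Domain_relcomp:
  "Range R \<subseteq> Domain S \<Longrightarrow> Domain (R O S) = Domain R"
  by blast

lemma same_sum_in_disaggregator:
  assumes "y0 \<in> Y" "ds \<noteq> []" "ds' \<noteq> []" "sum_list ds = sum_list ds'"
  shows "(Inl y0 # map Inr ds, Inl y0 # map Inr ds') \<in> disaggregator Y"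
  unfolding disaggregator_def using assms
  by (intro UnI2 CollectI exI[of _ y0] exI[of _ ds] exI[of _ ds']) simp

lemma integrator_subset_disaggregator: "integrator Y \<subseteq> disaggregator Y"
proof
  fix p assume "p \<in> integrator Y"
  then consider "p = ([], [])" | y0 where "p = ([Inl y0], [Inl y0])" "y0 \<in> Y"
    | y0 ds where "p = (Inl y0 # map Inr ds, Inl y0 # map Inr [sum_list ds])" "y0 \<in> Y" "ds \<noteq> []"
    unfolding integrator_def by auto
  then show "p \<in> disaggregator Y"
  proof cases
    case 3
    then show ?thesis using same_sum_in_disaggregator[of y0 Y ds "[sum_list ds]"] by simp
  qed (simp_all add: disaggregator_def)
qed

lemma Cons_in_lang_imp_obs:
  assumes "is_scd F" "y # ys \<in> lang F"
  shows "y \<in> obs F"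
proof -
  from assms(2) obtain v where "v \<in> init F" "reach_from F v (y # ys) \<noteq> {}"
    unfolding lang_def reached_def by auto
  then obtain w where "v \<in> states F" "w \<in> states F" "y \<in> trans F v w" by auto
  with assms(1) show ?thesis unfolding is_scd_def by blast
qed

lemma Range_delta_rel_subset_Domain_integrator:
  assumes "is_scd F"
  shows "Range (delta_rel F act) \<subseteq> Domain (integrator (obs F))"
proof
  fix r assume "r \<in> Range (delta_rel F act)"
  then consider "r = []" | y0 where "r = [Inl y0]" "y0 \<in> obs F"
    | y0 ys ds where "r = Inl y0 # map Inr ds" "y0 # ys \<in> lang F" "ys \<noteq> []" "length ds = length ys"
    unfolding delta_rel_def by blast
  then show "r \<in> Domain (integrator (obs F))"
  proof cases
    case 3
    then have "y0 \<in> obs F" "ds \<noteq> []" using Cons_in_lang_imp_obs[OF assms] by auto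
    with 3 show ?thesis unfolding integrator_def by blast
  qed (auto simp: integrator_def)
qed

theorem lemma7:
  fixes F :: "('v, 'y, 'c) scd"
    and act :: "'y \<Rightarrow> 'd::monoid_add \<Rightarrow> 'y"
  assumes "is_scd F"
    and "monoidal_variator (obs F) act"
    and "\<exists>F' :: ('w, 'y + 'd, 'c) scd.
           is_scd F' \<and> output_simulates F' F (delta_rel F act O disaggregator (obs F))"
  shows "\<exists>F'' :: ('w, 'y + 'd, 'c) scd.
           is_scd F'' \<and> output_simulates F'' F (delta_rel F act O integrator (obs F))"
proof -
  obtain F' :: "('w, 'y + 'd, 'c) scd" where F': "is_scd F'"
    and sim: "output_simulates F' F (delta_rel F act O disaggregator (obs F))"
    using assms(3) by blast
  have sub: "delta_rel F act O integrator (obs F) \<subseteq> delta_rel F act O disaggregator (obs F)"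
    by (rule relcomp_mono[OF order_refl integrator_subset_disaggregator])
  have "lang F \<subseteq> Domain (delta_rel F act)"
    using output_simulates_lang_subset_Domain[OF sim] by blast
  also have "\<dots> = Domain (delta_rel F act O integrator (obs F))"
    using Domain_relcomp[OF Range_delta_rel_subset_Domain_integrator[OF assms(1)]] by (rule sym)
  finally have "output_simulates F' F (delta_rel F act O integrator (obs F))"
    by (rule output_simulates_subrel[OF sim sub])
  with F' show ?thesis by blast
qed

end
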